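(* Let $\mathcal{G}$ be a $2$-$(n,b,k,r,\lambda)$ design. Then \[ \frac{n\lambda}{k}\leq e(\mathcal{G})\leq\frac{(n-1)\lambda}{k-1}. \] Moreover, if $\mathcal{G}$ is a symmetric design, then $e(\mathcal{G})=k=r$.
   Context: A $2$-$(n,b,k,r,\lambda)$ design is regarded as a $k$-uniform $r$-regular hypergraph $\mathcal{G}$ on $n$ vertices with $b$ edges (edges are $k$-element vertex subsets) such that every pair of distinct vertices lies in exactly $\lambda$ common edges. It is symmetric if $n=b$. For a proper nonempty $S\subset V(\mathcal{G})$ with $\overline{S}=V(\mathcal{G})\setminus S$, $E(S,\overline{S})$ is the set of edges containing vertices of both $S$ and $\overline{S}$; the edge connectivity $e(\mathcal{G})$ is the minimum of $|E(S,\overline{S})|$ over all proper nonempty $S$. *)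

theory Defs
  imports Main "HOL.Real"
begin

definition design2 :: "'a set \<Rightarrow> 'a set set \<Rightarrow> nat \<Rightarrow> nat \<Rightarrow> nat \<Rightarrow> nat \<Rightarrow> nat \<Rightarrow> bool" where
  "design2 V E n b k r lam \<longleftrightarrow>
     finite V \<and> card V = n \<and> E \<subseteq> Pow V \<and> finite E \<and> card E = b \<and>
     (\<forall>e\<in>E. card e = k) \<and>
     (\<forall>v\<in>V. card {e\<in>E. v \<in> e} = r) \<and>
     (\<forall>x\<in>V. \<forall>y\<in>V. x \<noteq> y \<longrightarrow> card {e\<in>E. x \<in> e \<and> y \<in> e} = lam)"

definition cut_edges :: "'a set \<Rightarrow> 'a set set \<Rightarrow> 'a set \<Rightarrow> 'a set set" where
  "cut_edges V E S = {e\<in>E. e \<inter> S \<noteq> {} \<and> e \<inter> (V - S) \<noteq> {}}"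

definition edge_conn :: "'a set \<Rightarrow> 'a set set \<Rightarrow> nat" where
  "edge_conn V E = Min {card (cut_edges V E S) | S. S \<subset> V \<and> S \<noteq> {}}"

end

theory Submission
  imports Defs
begin

text \<open>Count the pairs (x, y) with x \<in> S, y \<in> V - S and a common edge in two ways: edgewise
  every cut edge e contributes |e \<inter> S| |e - S| \<le> k |S| |V - S| / n pairs, while pairwise
  every pair contributes \<lambda>. This gives n \<lambda> \<le> k |E(S, V - S)|. The upper bound is attained
  by a single vertex, whose cut consists of its r edges, and r (k - 1) = \<lambda> (n - 1).
  For a symmetric design b k = n r forces k = r, and k - 1 < n \<lambda> / k rules out a smaller cut.\<close>

lemma card_filter_eq_sum: "finite A \<Longrightarrow> card {x\<in>A. P x} = (\<Sum>x\<in>A. if P x then 1 else 0)"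
  by (simp add: sum.If_cases Int_def)

lemma design2_pair_count:
  assumes d: "design2 V E n b k r lam" and S: "S \<subseteq> V"
  shows "(\<Sum>e\<in>E. card (e \<inter> S) * card (e - S)) = lam * (card S * card (V - S))"
proof -
  have fV: "finite V" and EV: "E \<subseteq> Pow V" and fE: "finite E"
    and pairs: "\<And>x y. x \<in> V \<Longrightarrow> y \<in> V \<Longrightarrow> x \<noteq> y \<Longrightarrow> card {e\<in>E. x \<in> e \<and> y \<in> e} = lam"
    using d unfolding design2_def by auto
  let ?P = "S \<times> (V - S)"
  let ?inc = "\<lambda>e p. if fst p \<in> e \<and> snd p \<in> e then 1 else 0 :: nat"
  have fP: "finite ?P" using S fV finite_subset by blast
  have "(\<Sum>e\<in>E. card (e \<inter> S) * card (e - S)) = (\<Sum>e\<in>E. \<Sum>p\<in>?P. ?inc e p)"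
  proof (rule sum.cong[OF refl])
    fix e assume "e \<in> E"
    then have "(e \<inter> S) \<times> (e - S) = {p\<in>?P. fst p \<in> e \<and> snd p \<in> e}"
      using EV by auto
    then have "card (e \<inter> S) * card (e - S) = card {p\<in>?P. fst p \<in> e \<and> snd p \<in> e}"
      by (metis card_cartesian_product)
    then show "card (e \<inter> S) * card (e - S) = (\<Sum>p\<in>?P. ?inc e p)"
      by (simp add: card_filter_eq_sum[OF fP])
  qed
  also have "\<dots> = (\<Sum>p\<in>?P. \<Sum>e\<in>E. ?inc e p)"
    by (rule sum.swap)
  also have "\<dots> = (\<Sum>p\<in>?P. lam)"
  proof (rule sum.cong[OF refl])
    fix p assume "p \<in> ?P"
    then have "card {e\<in>E. fst p \<in> e \<and> snd p \<in> e} = lam"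
      using S by (intro pairs) auto
    then show "(\<Sum>e\<in>E. ?inc e p) = lam"
      by (simp add: card_filter_eq_sum[OF fE])
  qed
  finally show ?thesis
    by (simp add: card_cartesian_product)
qed

text \<open>The edgewise estimate: with a + c = k, a \<le> s, c \<le> t, s + t = n one has n a c \<le> k s t.\<close>

lemma mult_le_add_mult_add: "(a + c + p + q) * (a * c) \<le> (a + c) * ((a + p) * (c + q))"
  for a c p q :: nat
  by (simp add: algebra_simps)

lemma design2_card_cut_edges_ge:
  assumes d: "design2 V E n b k r lam" and S: "S \<subset> V" "S \<noteq> {}"
  shows "n * lam \<le> card (cut_edges V E S) * k"
proof -
  have fV: "finite V" and EV: "E \<subseteq> Pow V" and fE: "finite E" and cV: "card V = n"
    and ck: "\<And>e. e \<in> E \<Longrightarrow> card e = k"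
    using d unfolding design2_def by auto
  define s where "s = card S"
  define t where "t = card (V - S)"
  define C where "C = cut_edges V E S"
  have fS: "finite S" using S fV finite_subset by blast
  have "t = n - s" "s \<le> n"
    unfolding s_def t_def cV[symmetric] using S fS fV by (auto simp: card_Diff_subset card_mono)
  then have n_eq: "n = s + t" by simp
  have st_pos: "s * t > 0"
    using S fS fV unfolding s_def t_def by (auto simp: card_gt_0_iff)
  have CE: "C \<subseteq> E" unfolding C_def cut_edges_def by auto
  have "(\<Sum>e\<in>E. card (e \<inter> S) * card (e - S)) = (\<Sum>e\<in>C. card (e \<inter> S) * card (e - S))"
  proof (rule sum.mono_neutral_right[OF fE CE], intro ballI)
    fix e assume "e \<in> E - C"
    then have "e \<inter> S = {} \<or> e - S = {}" using EV unfolding C_def cut_edges_def by auto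
    then show "card (e \<inter> S) * card (e - S) = 0" by (metis card.empty mult_0 mult_0_right)
  qed
  then have "n * (lam * (s * t)) = (\<Sum>e\<in>C. n * (card (e \<inter> S) * card (e - S)))"
    using design2_pair_count[OF d] S unfolding s_def t_def by (simp add: sum_distrib_left)
  also have "\<dots> \<le> (\<Sum>e\<in>C. k * (s * t))"
  proof (rule sum_mono)
    fix e assume "e \<in> C"
    then have eE: "e \<in> E" and eV: "e \<subseteq> V" using CE EV by auto
    define a where "a = card (e \<inter> S)"
    define c where "c = card (e - S)"
    have "finite e" using eV fV finite_subset by blast
    then have k_eq: "k = a + c"
      unfolding a_def c_def ck[OF eE, symmetric] by (rule card_Int_Diff)
    have "a \<le> s" unfolding a_def s_def using fS by (simp add: card_mono)
    then obtain p where p: "s = a + p" using le_Suc_ex by blast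
    have "c \<le> t" unfolding c_def t_def using fV eV by (intro card_mono) auto
    then obtain q where q: "t = c + q" using le_Suc_ex by blast
    have "n * (a * c) \<le> k * (s * t)"
      using mult_le_add_mult_add[of a c p q] by (simp add: n_eq k_eq p q ac_simps)
    then show "n * (card (e \<inter> S) * card (e - S)) \<le> k * (s * t)"
      unfolding a_def c_def .
  qed
  finally have "(n * lam) * (s * t) \<le> (card C * k) * (s * t)"
    by (simp add: ac_simps)
  then show ?thesis using st_pos unfolding C_def by simp
qed

lemma design2_card_cut_edges_singleton:
  assumes d: "design2 V E n b k r lam" and v: "v \<in> V" and k: "k \<ge> 2"
  shows "card (cut_edges V E {v}) = r"
proof -
  have EV: "E \<subseteq> Pow V" and ck: "\<And>e. e \<in> E \<Longrightarrow> card e = k"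
    and "card {e\<in>E. v \<in> e} = r"
    using d v unfolding design2_def by auto
  moreover have "cut_edges V E {v} = {e\<in>E. v \<in> e}"
  proof (intro set_eqI iffI)
    fix e assume e: "e \<in> {e\<in>E. v \<in> e}"
    then have "e \<noteq> {v}" using ck k by fastforce
    then show "e \<in> cut_edges V E {v}" unfolding cut_edges_def using e EV by auto
  qed (auto simp: cut_edges_def)
  ultimately show ?thesis by simp
qed

lemma design2_block_size_ge_2:
  assumes d: "design2 V E n b k r lam" and "n \<ge> 2" and "lam \<ge> 1"
  shows "k \<ge> 2"
proof -
  have fV: "finite V" and EV: "E \<subseteq> Pow V" and cV: "card V = n"
    and ck: "\<And>e. e \<in> E \<Longrightarrow> card e = k"
    and pairs: "\<And>x y. x \<in> V \<Longrightarrow> y \<in> V \<Longrightarrow> x \<noteq> y \<Longrightarrow> card {e\<in>E. x \<in> e \<and> y \<in> e} = lam"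
    using d unfolding design2_def by auto
  obtain x where x: "x \<in> V"
    using \<open>n \<ge> 2\<close> cV by fastforce
  moreover have "card (V - {x}) \<noteq> 0"
    using x fV cV \<open>n \<ge> 2\<close> by simp
  then obtain y where "y \<in> V - {x}"
    by (metis card.empty ex_in_conv)
  ultimately have xy: "x \<in> V" "y \<in> V" "x \<noteq> y" by auto
  then have "card {e\<in>E. x \<in> e \<and> y \<in> e} \<noteq> 0"
    using pairs \<open>lam \<ge> 1\<close> by simp
  then have "{e\<in>E. x \<in> e \<and> y \<in> e} \<noteq> {}"
    by (metis card.empty)
  then obtain e where e: "e \<in> E" "x \<in> e" "y \<in> e" by blast
  then have "card {x, y} \<le> card e"
    using EV fV by (intro card_mono) (auto intro: finite_subset)
  then show ?thesis using ck[OF e(1)] xy by simp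
qed

lemma design2_replication_eq:
  assumes d: "design2 V E n b k r lam" and x: "x \<in> V"
  shows "r * (k - 1) = lam * (n - 1)"
proof -
  have fV: "finite V" and EV: "E \<subseteq> Pow V" and fE: "finite E" and cV: "card V = n"
    and ck: "\<And>e. e \<in> E \<Longrightarrow> card e = k" and cr: "card {e\<in>E. x \<in> e} = r"
    using d x unfolding design2_def by auto
  have "(\<Sum>e\<in>E. card (e \<inter> {x}) * card (e - {x})) = (\<Sum>e\<in>E. if x \<in> e then k - 1 else 0)"
  proof (rule sum.cong[OF refl])
    fix e assume e: "e \<in> E"
    then have "finite e" using EV fV finite_subset by blast
    then show "card (e \<inter> {x}) * card (e - {x}) = (if x \<in> e then k - 1 else 0)"
      using ck[OF e] by auto
  qed
  also have "\<dots> = r * (k - 1)"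
    unfolding cr[symmetric] by (simp add: sum.If_cases[OF fE] Int_def)
  finally show ?thesis
    using design2_pair_count[OF d, of "{x}"] x cV fV by simp
qed

lemma design2_block_count_eq:
  assumes d: "design2 V E n b k r lam"
  shows "b * k = n * r"
proof -
  have fV: "finite V" and EV: "E \<subseteq> Pow V" and fE: "finite E" and cV: "card V = n"
    and cE: "card E = b" and ck: "\<And>e. e \<in> E \<Longrightarrow> card e = k"
    and cr: "\<And>v. v \<in> V \<Longrightarrow> card {e\<in>E. v \<in> e} = r"
    using d unfolding design2_def by auto
  have "b * k = (\<Sum>e\<in>E. card e)" using ck cE by simp
  also have "\<dots> = (\<Sum>e\<in>E. \<Sum>v\<in>V. if v \<in> e then 1 else 0)"
  proof (rule sum.cong[OF refl])
    fix e assume "e \<in> E"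
    then have "e = {v\<in>V. v \<in> e}" using EV by auto
    then show "card e = (\<Sum>v\<in>V. if v \<in> e then 1 else 0)"
      by (metis card_filter_eq_sum[OF fV])
  qed
  also have "\<dots> = (\<Sum>v\<in>V. \<Sum>e\<in>E. if v \<in> e then 1 else 0)"
    by (rule sum.swap)
  also have "\<dots> = (\<Sum>v\<in>V. r)"
    using cr by (simp add: card_filter_eq_sum[OF fE, symmetric])
  finally show ?thesis using cV by simp
qed

lemma finite_cut_sizes:
  "finite E \<Longrightarrow> finite {card (cut_edges V E S) | S. S \<subset> V \<and> S \<noteq> {}}"
  by (rule finite_subset[of _ "{..card E}"]) (auto simp: cut_edges_def intro!: card_mono)

lemma edge_conn_le_card_cut_edges:
  assumes "finite E" and "S \<subset> V" and "S \<noteq> {}"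
  shows "edge_conn V E \<le> card (cut_edges V E S)"
  unfolding edge_conn_def using assms by (intro Min_le finite_cut_sizes) auto

lemma edge_conn_attained:
  assumes "finite E" and "S \<subset> V" and "S \<noteq> {}"
  obtains T where "T \<subset> V" "T \<noteq> {}" "edge_conn V E = card (cut_edges V E T)"
proof -
  have "edge_conn V E \<in> {card (cut_edges V E S) | S. S \<subset> V \<and> S \<noteq> {}}"
    unfolding edge_conn_def using assms by (intro Min_in finite_cut_sizes) auto
  then show ?thesis using that by blast
qed

lemma design2_singleton_psubset:
  assumes "design2 V E n b k r lam" and "n \<ge> 2"
  obtains x where "x \<in> V" "{x} \<subset> V"
proof -
  have cV: "card V = n" using assms(1) unfolding design2_def by auto
  obtain x where x: "x \<in> V"
    using \<open>n \<ge> 2\<close> cV by fastforce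
  moreover have "{x} \<noteq> V"
    using \<open>n \<ge> 2\<close> cV by auto
  ultimately show ?thesis using that by blast
qed

lemma design2_edge_conn_ge:
  assumes d: "design2 V E n b k r lam" and "n \<ge> 2"
  shows "n * lam \<le> edge_conn V E * k"
proof -
  obtain x where x: "{x} \<subset> V"
    using design2_singleton_psubset[OF d \<open>n \<ge> 2\<close>] .
  have "finite E" using d unfolding design2_def by auto
  then obtain S where "S \<subset> V" "S \<noteq> {}" "edge_conn V E = card (cut_edges V E S)"
    using x by (rule edge_conn_attained) simp
  then show ?thesis using design2_card_cut_edges_ge[OF d] by simp
qed

lemma design2_edge_conn_le_replication:
  assumes d: "design2 V E n b k r lam" and "n \<ge> 2" and "lam \<ge> 1"
  shows "edge_conn V E \<le> r"
proof -
  obtain x where x: "x \<in> V" "{x} \<subset> V"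
    using design2_singleton_psubset[OF d \<open>n \<ge> 2\<close>] .
  have "finite E" using d unfolding design2_def by auto
  then have "edge_conn V E \<le> card (cut_edges V E {x})"
    by (rule edge_conn_le_card_cut_edges) (use x in auto)
  also have "\<dots> = r"
    using design2_card_cut_edges_singleton[OF d x(1) design2_block_size_ge_2[OF assms]] .
  finally show ?thesis .
qed

theorem theorem3p9:
  fixes V :: "'a set" and E :: "'a set set" and n b k r lam :: nat
  assumes "design2 V E n b k r lam"
    and "n \<ge> 2"
    and "lam \<ge> 1"
  shows "real n * real lam / real k \<le> real (edge_conn V E)
       \<and> real (edge_conn V E) \<le> (real n - 1) * real lam / (real k - 1)
       \<and> (n = b \<longrightarrow> edge_conn V E = k \<and> k = r)"
proof -
  note d = assms(1)
  have k: "k \<ge> 2" using design2_block_size_ge_2 assms .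
  have low: "n * lam \<le> edge_conn V E * k" using design2_edge_conn_ge[OF d assms(2)] .
  have le_r: "edge_conn V E \<le> r" using design2_edge_conn_le_replication assms .
  obtain x where "x \<in> V" using design2_singleton_psubset[OF d assms(2)] .
  then have rk: "r * (k - 1) = lam * (n - 1)" using design2_replication_eq[OF d] by blast
  then have "real (r * (k - 1)) = real (lam * (n - 1))"
    by (simp only:)
  then have "real r * (real k - 1) = real lam * (real n - 1)"
    using k assms(2) by (simp add: of_nat_diff)
  then have r_eq: "real r = (real n - 1) * real lam / (real k - 1)"
    using k by (simp add: field_simps)
  have "n = b \<Longrightarrow> edge_conn V E = k \<and> k = r"
  proof -
    assume "n = b"
    then have kr: "k = r" using design2_block_count_eq[OF d] assms(2) by simp
    have "(k - 1) * k < n * lam"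
      using rk kr assms(2,3) by (simp add: mult.commute)
    then have "(k - 1) * k < edge_conn V E * k"
      using low by linarith
    then show ?thesis using k le_r kr by simp
  qed
  moreover have "real n * real lam / real k \<le> real (edge_conn V E)"
    using low k by (simp add: divide_le_eq flip: of_nat_mult)
  moreover have "real (edge_conn V E) \<le> (real n - 1) * real lam / (real k - 1)"
    unfolding r_eq[symmetric] using le_r by simp
  ultimately show ?thesis by blast
qed

end
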